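(* Let $X$ be a separable Banach space, let $(E'_j)$ be a $1$-norming FMD of $X$ with biorthogonal sequence $(F'_j)$. Then $(E'_j)$ can be blocked to an FMD $(E_n)$ such that $(E_n)$ and its biorthogonal sequence $(F_n)$ satisfy, for all $m\le n$ in $\mathbb N$ (with $E_0=\{0\}\subset X$, $F_0=\{0\}\subset X^*$): (1) for every $e^*\in(E_m+E_{m+1}+\dots+E_n)^*$ there is $x^*\in F_{m-1}+F_m+\dots+F_{n+1}$ with $x^*|_{E_m+\dots+E_n}=e^*$ and $\|x^*\|\le 2.5\|e^*\|$; (2) for every $f^*\in(F_m+F_{m+1}+\dots+F_n)^*$ there is $z\in E_{m-1}+E_m+\dots+E_{n+1}$ with $z|_{F_m+\dots+F_n}=f^*$ (i.e. $f(z)=f^*(f)$ for all $f\in F_m+\dots+F_n$) and $\|z\|\le 2.5\|f^*\|$; (3) for all $x^*\in F_m+\dots+F_n$: $\|x^*\|\le 2.5\sup\{|x^*(x)|: x\in E_{m-1}+E_m+\dots+E_{n+1},\|x\|\le1\}$; (4) for all $x\in E_m+\dots+E_n$: $\|x\|\le 2.5\sup\{|x^*(x)|: x^*\in F_{m-1}+F_m+\dots+F_{n+1},\|x^*\|\le1\}$.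
   Context: A sequence $(E_k)$ of finite dimensional subspaces of $X$ is an FMD of $X$ if, with $F_k=\{f\in X^*: f|_{E_j}=0 \text{ for all } j\neq k\}$ (the biorthogonal sequence), (a) $\mathrm{span}(E_k)$ is dense in $X$, (b) $E_k\cap\overline{\mathrm{span}(E_j:j\ne k)}=\{0\}$ for every $k$, and (c) $(F_k)$ is total ($f(x)=0$ for all $f\in\bigcup_kF_k$ implies $x=0$). The FMD is $1$-norming if $\sup\{f(x): f\in\mathrm{span}(F_j:j\in\mathbb N),\|f\|\le1\}\ge\|x\|$ for all $x\in X$. A blocking of $(E'_j)$ is a sequence $E_k=\mathrm{span}(E'_j:n_{k-1}<j\le n_k)$ for some $0=n_0<n_1<n_2<\cdots$ in $\mathbb N$; it is again an FMD with biorthogonal sequence $F_k=\mathrm{span}(F'_j:n_{k-1}<j\le n_k)$. *)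

theory Defs
  imports "HOL-Analysis.Analysis"
begin

(* Real Banach spaces; the dual X* is the type of bounded linear functionals
  'a =>L real.  Sequences of subspaces are indexed by nat, with meaningful
  indices k >= 1 (index 0 is reserved for the zero space E_0, F_0). *)

definition separable_space :: "'a::metric_space itself \<Rightarrow> bool" where
  "separable_space _ \<longleftrightarrow> (\<exists>D::'a set. countable D \<and> closure D = UNIV)"

definition fin_dim_subspace :: "'a::real_vector set \<Rightarrow> bool" where
  "fin_dim_subspace S \<longleftrightarrow> subspace S \<and> (\<exists>B. finite B \<and> S = span B)"

definition biorth :: "(nat \<Rightarrow> 'a::real_normed_vector set) \<Rightarrow> nat \<Rightarrow> ('a \<Rightarrow>\<^sub>L real) set" where
  "biorth E k = {f. \<forall>j\<ge>1. j \<noteq> k \<longrightarrow> (\<forall>x\<in>E j. blinfun_apply f x = 0)}"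

definition FMD :: "(nat \<Rightarrow> 'a::real_normed_vector set) \<Rightarrow> bool" where
  "FMD E \<longleftrightarrow>
     (\<forall>k\<ge>1. fin_dim_subspace (E k)) \<and>
     closure (span (\<Union>k\<in>{1..}. E k)) = UNIV \<and>
     (\<forall>k\<ge>1. E k \<inter> closure (span (\<Union>j\<in>{1..} - {k}. E j)) = {0}) \<and>
     (\<forall>x. (\<forall>k\<ge>1. \<forall>f\<in>biorth E k. blinfun_apply f x = 0) \<longrightarrow> x = 0)"

definition one_norming :: "(nat \<Rightarrow> 'a::real_normed_vector set) \<Rightarrow> bool" where
  "one_norming E \<longleftrightarrow>
     (\<forall>x. norm x \<le> Sup {blinfun_apply f x | f. f \<in> span (\<Union>k\<in>{1..}. biorth E k) \<and> norm f \<le> 1})"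

definition is_blocking :: "(nat \<Rightarrow> 'a::real_vector set) \<Rightarrow> (nat \<Rightarrow> 'a set) \<Rightarrow> bool" where
  "is_blocking E' E \<longleftrightarrow>
     (\<exists>n::nat \<Rightarrow> nat. n 0 = 0 \<and> strict_mono n \<and>
        (\<forall>k\<ge>1. E k = span (\<Union>j\<in>{n (k - 1)<..n k}. E' j)))"

definition biorth0 :: "(nat \<Rightarrow> 'a::real_normed_vector set) \<Rightarrow> nat \<Rightarrow> ('a \<Rightarrow>\<^sub>L real) set" where
  "biorth0 E k = (if k = 0 then {0} else biorth E k)"

definition lin_functional_on :: "'a::real_vector set \<Rightarrow> ('a \<Rightarrow> real) \<Rightarrow> bool" where
  "lin_functional_on S g \<longleftrightarrow>
     (\<forall>x\<in>S. \<forall>y\<in>S. g (x + y) = g x + g y) \<and> (\<forall>x\<in>S. \<forall>c. g (c *\<^sub>R x) = c * g x)"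

definition dual_norm_on :: "'a::real_normed_vector set \<Rightarrow> ('a \<Rightarrow> real) \<Rightarrow> real" where
  "dual_norm_on S g = Sup {\<bar>g x\<bar> | x. x \<in> S \<and> norm x \<le> 1}"

end

theory Submission
  imports Defs
begin

(*
  Choose 0 = \<nu> 0 < \<nu> 1 < ... such that, for every k, some finite subset of the unit ball of
  F'_1 + ... + F'_(\<nu>(k+1)) is (11/10)-norming for E'_1 + ... + E'_(\<nu> k), and likewise with E'
  and F' exchanged; \<nu>(k+1) exists because the unit sphere of a finite-dimensional space is
  compact and span F' is 1-norming (on the other side, span E' is dense).  For the blocks m..n,
  correct every t of the finite set norming E'_1 + ... + E'_(\<nu> n) by some g in
  F'_1 + ... + F'_(\<nu>(m-1)) of norm at most 11/10 that agrees with t on E'_1 + ... + E'_(\<nu>(m-2)).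
  Then t - g lies in F_(m-1) + ... + F_(n+1), has norm at most 21/10 and agrees with t on
  E_m + ... + E_n, so these functionals norm E_m + ... + E_n with constant (11/10)(21/10) < 5/2.
  This gives (4); a finite norming subset of a unit ball also yields norm-controlled extensions
  (a finite-dimensional Hahn-Banach argument, done by least squares), which gives (1).
  Properties (2) and (3) are (1) and (4) for the system with the roles of E and F exchanged.
*)

section \<open>Finite-dimensional subspaces of normed spaces\<close>

lemma span_UN_span: "span (\<Union>i\<in>I. span (A i)) = span (\<Union>i\<in>I. A i)"
proof
  show "span (\<Union>i\<in>I. span (A i)) \<subseteq> span (\<Union>i\<in>I. A i)"
    by (intro span_minimal) (auto intro: span_mono[THEN subsetD])
  show "span (\<Union>i\<in>I. A i) \<subseteq> span (\<Union>i\<in>I. span (A i))"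
    by (intro span_mono) (auto intro: span_base)
qed

lemma finite_subset_span_UN_atMost:
  fixes A :: "nat \<Rightarrow> 'a::real_vector set"
  assumes "finite S" and "S \<subseteq> span (\<Union>i. A i)"
  shows "\<exists>N. S \<subseteq> span (\<Union>i\<le>N. A i)"
proof -
  have "\<exists>N. x \<in> span (\<Union>i\<le>N. A i)" if "x \<in> span (\<Union>i. A i)" for x
    using that
  proof (induction rule: span_induct_alt)
    case base
    then show ?case using span_zero by blast
  next
    case (step c a y)
    obtain k N where a: "a \<in> A k" and y: "y \<in> span (\<Union>i\<le>N. A i)" using step by blast
    have "span (\<Union>i\<le>N. A i) \<subseteq> span (\<Union>i\<le>max k N. A i)"
      by (intro span_mono UN_mono) auto
    moreover have "a \<in> span (\<Union>i\<le>max k N. A i)" using a by (intro span_base) auto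
    ultimately have "c *\<^sub>R a + y \<in> span (\<Union>i\<le>max k N. A i)"
      using y by (intro span_add span_scale) auto
    then show ?case by blast
  qed
  then have "\<forall>x\<in>S. \<exists>N. x \<in> span (\<Union>i\<le>N. A i)" using assms(2) by blast
  then obtain N where N: "\<And>x. x \<in> S \<Longrightarrow> x \<in> span (\<Union>i\<le>N x. A i)" by (metis bchoice)
  have "x \<in> span (\<Union>i\<le>Max (N ` S). A i)" if "x \<in> S" for x
  proof -
    have "N x \<le> Max (N ` S)" by (rule Max_ge) (use that assms(1) in auto)
    then have "(\<Union>i\<le>N x. A i) \<subseteq> (\<Union>i\<le>Max (N ` S). A i)" by (intro UN_mono) auto
    then show ?thesis using N[OF that] span_mono by blast
  qed
  then show ?thesis by blast
qed

lemma span_distance_pos: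
  fixes b :: "'v::real_normed_vector"
  assumes cpt: "compact (span B \<inter> cball 0 (2 * norm b))" and nb: "b \<notin> span B"
  shows "\<exists>d>0. \<forall>y\<in>span B. d \<le> norm (b - y)"
proof -
  let ?K = "span B \<inter> cball 0 (2 * norm b)"
  have "0 \<in> ?K" by (simp add: span_zero)
  moreover have "continuous_on ?K (\<lambda>y. norm (b - y))" by (intro continuous_intros)
  ultimately obtain y0 where y0: "y0 \<in> ?K" "\<And>y. y \<in> ?K \<Longrightarrow> norm (b - y0) \<le> norm (b - y)"
    using continuous_attains_inf[OF cpt] by blast
  have "b - y0 \<noteq> 0" "b \<noteq> 0" using y0(1) nb span_zero by auto
  show ?thesis
  proof (intro exI[of _ "min (norm (b - y0)) (norm b)"] conjI ballI)
    show "0 < min (norm (b - y0)) (norm b)" using \<open>b - y0 \<noteq> 0\<close> \<open>b \<noteq> 0\<close> by simp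
    fix y assume y: "y \<in> span B"
    show "min (norm (b - y0)) (norm b) \<le> norm (b - y)"
    proof (cases "norm y \<le> 2 * norm b")
      case True
      then show ?thesis using y y0(2) by fastforce
    next
      case False
      have "norm y - norm b \<le> norm (b - y)"
        by (metis norm_minus_commute norm_triangle_ineq2)
      then show ?thesis using False by linarith
    qed
  qed
qed

lemma abs_scale_le_norm_add:
  fixes b :: "'v::real_normed_vector"
  assumes "\<forall>y\<in>span B. d \<le> norm (b - y)" and "y \<in> span B"
  shows "\<bar>k\<bar> * d \<le> norm (k *\<^sub>R b + y)"
proof (cases "k = 0")
  case True
  then show ?thesis by simp
next
  case False
  have "(-(1/k)) *\<^sub>R y \<in> span B" using assms(2) by (simp add: span_scale span_neg)
  then have "d \<le> norm (b - (-(1/k)) *\<^sub>R y)" using assms(1) by blast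
  also have "b - (-(1/k)) *\<^sub>R y = (1/k) *\<^sub>R (k *\<^sub>R b + y)" using False
    by (simp add: algebra_simps)
  finally have "d \<le> norm (k *\<^sub>R b + y) / \<bar>k\<bar>" by simp
  then show ?thesis using False by (simp add: field_simps)
qed

lemma compact_span_Int_cball:
  fixes B :: "'v::real_normed_vector set"
  assumes "finite B"
  shows "compact (span B \<inter> cball 0 r)"
  using assms
proof (induction B arbitrary: r rule: finite_induct)
  case empty
  show ?case using finite_imp_compact[of "{0::'v} \<inter> cball 0 r"] by simp
next
  case (insert b B)
  show ?case
  proof (cases "b \<in> span B")
    case True
    then show ?thesis using insert.IH by (simp add: span_redundant)
  next
    case False
    obtain d where d: "d > 0" "\<forall>y\<in>span B. d \<le> norm (b - y)"
      using span_distance_pos[OF insert.IH False] by blast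
    let ?f = "\<lambda>z::real \<times> 'v. fst z *\<^sub>R b + snd z"
    let ?T = "{-(r/d)..r/d} \<times> (span B \<inter> cball 0 (r + r/d * norm b))"
    have "continuous_on ?T ?f" by (intro continuous_intros)
    moreover have "compact ?T" by (intro compact_Times compact_Icc insert.IH)
    ultimately have "compact (?f ` ?T)" by (rule compact_continuous_image)
    then have "compact (?f ` ?T \<inter> cball 0 r)" by (rule compact_Int_closed) simp
    moreover have "span (insert b B) \<inter> cball 0 r = ?f ` ?T \<inter> cball 0 r"
    proof (intro equalityI subsetI)
      fix x assume x: "x \<in> span (insert b B) \<inter> cball 0 r"
      then obtain k where yB: "x - k *\<^sub>R b \<in> span B" using span_breakdown_eq by blast
      have nx: "norm x \<le> r" using x by auto
      have "\<bar>k\<bar> * d \<le> norm x" using abs_scale_le_norm_add[OF d(2) yB, of k] by simp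
      then have kb: "\<bar>k\<bar> \<le> r / d" using nx d(1) by (simp add: field_simps)
      have "norm (x - k *\<^sub>R b) \<le> norm x + \<bar>k\<bar> * norm b"
        using norm_triangle_ineq4[of x "k *\<^sub>R b"] by simp
      also have "\<dots> \<le> r + r/d * norm b"
        using nx mult_right_mono[OF kb norm_ge_zero[of b]] by linarith
      finally have "(k, x - k *\<^sub>R b) \<in> ?T" using yB kb by auto
      then show "x \<in> ?f ` ?T \<inter> cball 0 r" using x by (intro IntI rev_image_eqI) auto
    next
      fix x assume "x \<in> ?f ` ?T \<inter> cball 0 r"
      then obtain k y where x: "x = k *\<^sub>R b + y" "y \<in> span B" "x \<in> cball 0 r" by auto
      have "y \<in> span (insert b B)" "b \<in> span (insert b B)"
        using x(2) span_mono[of B "insert b B"] by (auto simp: span_base)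
      then show "x \<in> span (insert b B) \<inter> cball 0 r" using x by (simp add: span_add span_scale)
    qed
    ultimately show ?thesis by simp
  qed
qed

lemma compact_span_Int_sphere:
  fixes B :: "'v::real_normed_vector set"
  assumes "finite B"
  shows "compact (span B \<inter> sphere 0 1)"
proof -
  have "closed (sphere (0::'v) 1)"
    unfolding sphere_def by (intro closed_Collect_eq continuous_intros)
  then have "compact (span B \<inter> cball 0 1 \<inter> sphere 0 1)"
    by (rule compact_Int_closed[OF compact_span_Int_cball[OF assms]])
  moreover have "span B \<inter> cball 0 1 \<inter> sphere 0 1 = span B \<inter> sphere (0::'v) 1" by auto
  ultimately show ?thesis by simp
qed

lemma lin_functional_on_zero: "lin_functional_on S e \<Longrightarrow> 0 \<in> S \<Longrightarrow> e 0 = 0"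
  unfolding lin_functional_on_def by (metis mult_zero_left scale_zero_left)

lemma lin_functional_on_subset: "lin_functional_on S e \<Longrightarrow> T \<subseteq> S \<Longrightarrow> lin_functional_on T e"
  unfolding lin_functional_on_def by blast

lemma lin_functional_on_sum:
  assumes lin: "lin_functional_on S e" and "subspace S" and "finite A" and "A \<subseteq> S"
  shows "e (\<Sum>b\<in>A. f b *\<^sub>R b) = (\<Sum>b\<in>A. f b * e b)"
  using \<open>finite A\<close> \<open>A \<subseteq> S\<close>
proof (induction A rule: finite_induct)
  case empty
  then show ?case using lin_functional_on_zero[OF lin subspace_0[OF \<open>subspace S\<close>]] by simp
next
  case (insert a A)
  have "a \<in> S" "A \<subseteq> S" using insert.prems by auto
  then have "(\<Sum>b\<in>A. f b *\<^sub>R b) \<in> S" "f a *\<^sub>R a \<in> S"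
    using subspace_scale[OF \<open>subspace S\<close>] by (auto intro: subspace_sum[OF \<open>subspace S\<close>])
  with lin \<open>a \<in> S\<close> have "e (f a *\<^sub>R a + (\<Sum>b\<in>A. f b *\<^sub>R b)) = f a * e a + e (\<Sum>b\<in>A. f b *\<^sub>R b)"
    unfolding lin_functional_on_def by simp
  then show ?case using insert by simp
qed

lemma lin_functional_on_bound_insert:
  fixes b :: "'v::real_normed_vector"
  assumes lin: "lin_functional_on (span (insert b B)) e"
    and M: "0 \<le> M" "\<forall>x\<in>span B. \<bar>e x\<bar> \<le> M * norm x"
    and d: "0 < d" "\<forall>y\<in>span B. d \<le> norm (b - y)"
    and x: "x \<in> span (insert b B)"
  shows "\<bar>e x\<bar> \<le> ((\<bar>e b\<bar> + M * norm b) / d + M) * norm x"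
proof -
  obtain k where yB: "x - k *\<^sub>R b \<in> span B" using x span_breakdown_eq by blast
  define y where "y = x - k *\<^sub>R b"
  have kd: "\<bar>k\<bar> \<le> norm x / d"
    using abs_scale_le_norm_add[OF d(2) yB, of k] d(1) by (simp add: field_simps)
  have b: "b \<in> span (insert b B)" by (simp add: span_base)
  then have "k *\<^sub>R b \<in> span (insert b B)" by (rule span_scale)
  moreover have "y \<in> span (insert b B)" using yB span_mono[of B "insert b B"] unfolding y_def by auto
  ultimately have "e (k *\<^sub>R b + y) = k * e b + e y"
    using lin b unfolding lin_functional_on_def by simp
  then have "e x = k * e b + e y" by (simp add: y_def)
  moreover have "\<bar>e y\<bar> \<le> M * norm y" using M(2) yB unfolding y_def by blast
  ultimately have "\<bar>e x\<bar> \<le> \<bar>k\<bar> * \<bar>e b\<bar> + M * norm y"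
    using abs_triangle_ineq[of "k * e b" "e y"] by (simp add: abs_mult)
  also have "\<dots> \<le> \<bar>k\<bar> * \<bar>e b\<bar> + M * (norm x + \<bar>k\<bar> * norm b)"
    using norm_triangle_ineq4[of x "k *\<^sub>R b"] M(1) unfolding y_def by (simp add: mult_left_mono)
  also have "\<bar>k\<bar> * \<bar>e b\<bar> + M * (norm x + \<bar>k\<bar> * norm b) =
      \<bar>k\<bar> * (\<bar>e b\<bar> + M * norm b) + M * norm x"
    by (simp add: algebra_simps)
  also have "\<dots> \<le> (norm x / d) * (\<bar>e b\<bar> + M * norm b) + M * norm x"
    using mult_right_mono[OF kd, of "\<bar>e b\<bar> + M * norm b"] M(1) by simp
  also have "\<dots> = ((\<bar>e b\<bar> + M * norm b) / d + M) * norm x" by (simp add: algebra_simps add_divide_distrib)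
  finally show ?thesis .
qed

lemma lin_functional_on_bounded:
  fixes B :: "'v::real_normed_vector set"
  assumes "finite B" "lin_functional_on (span B) e"
  shows "\<exists>M\<ge>0. \<forall>x\<in>span B. \<bar>e x\<bar> \<le> M * norm x"
  using assms
proof (induction B rule: finite_induct)
  case empty
  then show ?case
    using lin_functional_on_zero[OF empty.prems] by (intro exI[of _ 0]) (simp add: span_zero)
next
  case (insert b B)
  show ?case
  proof (cases "b \<in> span B")
    case True
    then show ?thesis using insert by (simp add: span_redundant)
  next
    case False
    have "span B \<subseteq> span (insert b B)" by (simp add: span_mono subset_insertI)
    then obtain M where M: "M \<ge> 0" "\<forall>x\<in>span B. \<bar>e x\<bar> \<le> M * norm x"
      using insert.IH[OF lin_functional_on_subset[OF insert.prems]] by blast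
    obtain d where d: "d > 0" "\<forall>y\<in>span B. d \<le> norm (b - y)"
      using span_distance_pos[OF compact_span_Int_cball[OF insert.hyps(1)] False] by blast
    have "0 \<le> (\<bar>e b\<bar> + M * norm b) / d + M" using M d by simp
    then show ?thesis
      using lin_functional_on_bound_insert[OF insert.prems M d] by blast
  qed
qed

lemma dual_norm_on_bound:
  fixes B :: "'v::real_normed_vector set"
  assumes fin: "finite B" and lin: "lin_functional_on (span B) e"
  shows "0 \<le> dual_norm_on (span B) e"
    and "\<And>x. x \<in> span B \<Longrightarrow> \<bar>e x\<bar> \<le> dual_norm_on (span B) e * norm x"
proof -
  obtain M where M: "M \<ge> 0" "\<forall>x\<in>span B. \<bar>e x\<bar> \<le> M * norm x"
    using lin_functional_on_bounded[OF fin lin] by blast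
  let ?A = "{\<bar>e x\<bar> | x. x \<in> span B \<and> norm x \<le> 1}"
  have e0: "e 0 = 0" by (rule lin_functional_on_zero[OF lin span_zero])
  have bdd: "bdd_above ?A"
  proof (rule bdd_aboveI)
    fix a assume "a \<in> ?A"
    then obtain x where "a = \<bar>e x\<bar>" "x \<in> span B" "norm x \<le> 1" by blast
    then show "a \<le> M" using M mult_left_mono[of "norm x" 1 M] by force
  qed
  have "0 \<le> Sup ?A"
    using e0 span_zero[of B] by (intro cSup_upper2[OF _ _ bdd, of 0]) auto
  then show "0 \<le> dual_norm_on (span B) e" unfolding dual_norm_on_def .
  fix x assume x: "x \<in> span B"
  show "\<bar>e x\<bar> \<le> dual_norm_on (span B) e * norm x"
  proof (cases "x = 0")
    case True
    then show ?thesis using e0 by simp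
  next
    case False
    have "(1 / norm x) *\<^sub>R x \<in> span B" using x by (simp add: span_scale)
    then have "\<bar>e ((1 / norm x) *\<^sub>R x)\<bar> \<le> Sup ?A"
      using False by (intro cSup_upper[OF _ bdd]) force
    moreover have "e ((1 / norm x) *\<^sub>R x) = e x / norm x"
      using lin x unfolding lin_functional_on_def by simp
    ultimately show ?thesis
      using False unfolding dual_norm_on_def by (simp add: abs_div field_simps)
  qed
qed

section \<open>Norming sets\<close>

definition norming_on ::
    "('u \<Rightarrow> 'v::real_normed_vector \<Rightarrow> real) \<Rightarrow> real \<Rightarrow> 'u set \<Rightarrow> 'v set \<Rightarrow> bool" where
  "norming_on p c T X \<longleftrightarrow> (\<forall>x\<in>X. \<exists>t\<in>T. norm x \<le> c * \<bar>p t x\<bar>)"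

lemma norming_on_mono: "norming_on p c T X \<Longrightarrow> c \<le> c' \<Longrightarrow> norming_on p c' T X"
  unfolding norming_on_def by (meson abs_ge_zero mult_right_mono order_trans)

lemma finite_norming_subset:
  fixes p :: "'u::real_normed_vector \<Rightarrow> 'v::real_normed_vector \<Rightarrow> real"
  assumes bb: "bounded_bilinear p" and fin: "finite B" and "0 \<in> T"
    and large: "\<And>x. x \<in> span B \<Longrightarrow> norm x = 1 \<Longrightarrow> \<exists>t\<in>T. 1 < c * \<bar>p t x\<bar>"
  shows "\<exists>S\<subseteq>T. finite S \<and> norming_on p c S (span B)"
proof -
  let ?U = "\<lambda>t. {y. 1 < c * \<bar>p t y\<bar>}"
  have "open (?U t)" for t
  proof -
    have "continuous_on UNIV (p t)"
      by (rule linear_continuous_on[OF bounded_bilinear.bounded_linear_right[OF bb]])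
    then show ?thesis by (intro open_Collect_less) (auto intro: continuous_intros)
  qed
  moreover have "span B \<inter> sphere 0 1 \<subseteq> (\<Union>t\<in>T. ?U t)" using large by auto
  ultimately obtain S where S: "S \<subseteq> T" "finite S" "span B \<inter> sphere 0 1 \<subseteq> (\<Union>t\<in>S. ?U t)"
    using compactE_image[OF compact_span_Int_sphere[OF fin]] by metis
  have "norming_on p c (insert 0 S) (span B)"
    unfolding norming_on_def
  proof
    fix x assume x: "x \<in> span B"
    show "\<exists>t\<in>insert 0 S. norm x \<le> c * \<bar>p t x\<bar>"
    proof (cases "x = 0")
      case True
      then show ?thesis by (auto simp: bounded_bilinear.zero_left[OF bb])
    next
      case False
      have "(1 / norm x) *\<^sub>R x \<in> span B \<inter> sphere 0 1" using x False by (simp add: span_scale)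
      then obtain t where "t \<in> S" "1 < c * \<bar>p t ((1 / norm x) *\<^sub>R x)\<bar>" using S(3) by blast
      moreover have "p t ((1 / norm x) *\<^sub>R x) = p t x / norm x"
        by (simp add: bounded_bilinear.scaleR_right[OF bb])
      ultimately show ?thesis using False by (auto simp: abs_div field_simps intro!: bexI[of _ t])
    qed
  qed
  then show ?thesis using S \<open>0 \<in> T\<close> by (intro exI[of _ "insert 0 S"]) auto
qed

lemma nonneg_if_nonneg_perturbation:
  fixes D E :: real
  assumes "0 \<le> E" and "\<And>s. 0 < s \<Longrightarrow> s \<le> 1 \<Longrightarrow> 0 \<le> 2 * D + s * E"
  shows "0 \<le> D"
proof (rule ccontr)
  assume "\<not> 0 \<le> D"
  define s where "s = min 1 (- D / (E + 1))"
  have "0 < s" "s \<le> 1" using \<open>\<not> 0 \<le> D\<close> \<open>0 \<le> E\<close> by (auto simp: s_def divide_neg_pos)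
  have "s * E \<le> - D / (E + 1) * E" using \<open>0 \<le> E\<close> by (intro mult_right_mono) (simp_all add: s_def)
  also have "\<dots> < - D" using \<open>\<not> 0 \<le> D\<close> \<open>0 \<le> E\<close> by (simp add: field_simps)
  finally show False using assms(2)[OF \<open>0 < s\<close> \<open>s \<le> 1\<close>] \<open>\<not> 0 \<le> D\<close> by linarith
qed

lemma least_squares_variational:
  fixes p :: "'u::real_vector \<Rightarrow> 'v \<Rightarrow> real"
  assumes lin: "\<And>b. linear (\<lambda>w. p w b)" and "convex C" and "w0 \<in> C" and "w \<in> C"
    and min: "\<And>w. w \<in> C \<Longrightarrow> (\<Sum>b\<in>B. (p w0 b - e b)\<^sup>2) \<le> (\<Sum>b\<in>B. (p w b - e b)\<^sup>2)"
  shows "0 \<le> (\<Sum>b\<in>B. (p w0 b - e b) * (p w b - p w0 b))"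
proof (rule nonneg_if_nonneg_perturbation)
  define r where "r b = p w0 b - e b" for b
  define d where "d b = p w b - p w0 b" for b
  show "0 \<le> (\<Sum>b\<in>B. (p w b - p w0 b)\<^sup>2)" by (simp add: sum_nonneg)
  fix s :: real assume s: "0 < s" "s \<le> 1"
  let ?ws = "(1 - s) *\<^sub>R w0 + s *\<^sub>R w"
  have "?ws \<in> C" using convexD[OF \<open>convex C\<close> \<open>w0 \<in> C\<close> \<open>w \<in> C\<close>] s by simp
  have ws: "p ?ws b - e b = r b + s * d b" for b
  proof -
    have "p ?ws b = (1 - s) * p w0 b + s * p w b"
      using linear_add[OF lin[of b]] linear_scale[OF lin[of b]] by simp
    then show ?thesis by (simp add: r_def d_def algebra_simps)
  qed
  have "(\<Sum>b\<in>B. (r b)\<^sup>2) \<le> (\<Sum>b\<in>B. (r b + s * d b)\<^sup>2)"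
    using min[OF \<open>?ws \<in> C\<close>] by (simp only: ws r_def)
  also have "\<dots> = (\<Sum>b\<in>B. (r b)\<^sup>2) + s * (2 * (\<Sum>b\<in>B. r b * d b) + s * (\<Sum>b\<in>B. (d b)\<^sup>2))"
    by (simp add: power2_eq_square algebra_simps sum.distrib sum_distrib_left)
  finally show "0 \<le> 2 * (\<Sum>b\<in>B. (p w0 b - e b) * (p w b - p w0 b)) + s * (\<Sum>b\<in>B. (p w b - p w0 b)\<^sup>2)"
    using s unfolding r_def d_def by (simp add: zero_le_mult_iff)
qed

lemma bilinear_eq_lin_functional_on_span:
  fixes p :: "'u::real_normed_vector \<Rightarrow> 'v::real_normed_vector \<Rightarrow> real"
  assumes bb: "bounded_bilinear p" and lin: "lin_functional_on (span B) e"
    and agree: "\<And>b. b \<in> B \<Longrightarrow> p w b = e b" and "y \<in> span B"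
  shows "p w y = e y"
proof -
  have "y \<in> span B \<and> p w y = e y"
    using \<open>y \<in> span B\<close>
  proof (induction rule: span_induct_alt)
    case base
    then show ?case
      using lin_functional_on_zero[OF lin span_zero] bounded_bilinear.zero_right[OF bb] span_zero
      by auto
  next
    case (step a b y)
    then have "b \<in> span B" by (simp add: span_base)
    with step agree lin show ?case
      by (simp add: lin_functional_on_def bounded_bilinear.add_right[OF bb]
          bounded_bilinear.scaleR_right[OF bb] span_add span_scale)
  qed
  then show ?thesis ..
qed

lemma norming_on_dominates:
  fixes p :: "'u::real_normed_vector \<Rightarrow> 'v::real_normed_vector \<Rightarrow> real"
  assumes bb: "bounded_bilinear p" and "norming_on p c T X" and "x \<in> X"
    and "\<bar>e x\<bar> \<le> M * norm x" and "0 \<le> M"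
  shows "\<exists>t\<in>T \<union> uminus ` T. e x \<le> p ((c * M) *\<^sub>R t) x"
proof -
  obtain t where t: "t \<in> T" "norm x \<le> c * \<bar>p t x\<bar>" using assms(2,3) unfolding norming_on_def by blast
  let ?s = "if 0 \<le> p t x then t else - t"
  have "p ((c * M) *\<^sub>R ?s) x = M * (c * \<bar>p t x\<bar>)"
    by (simp add: bounded_bilinear.scaleR_left[OF bb] bounded_bilinear.minus_left[OF bb])
  moreover have "e x \<le> M * (c * \<bar>p t x\<bar>)"
    using assms(4) t(2) \<open>0 \<le> M\<close> by (meson abs_ge_self mult_left_mono order_trans)
  ultimately show ?thesis using t(1) by (intro bexI[of _ ?s]) auto
qed

lemma least_squares_residual:
  fixes p :: "'u::real_normed_vector \<Rightarrow> 'v::real_normed_vector \<Rightarrow> real"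
  assumes bb: "bounded_bilinear p" and "finite B" and lin: "lin_functional_on (span B) e"
  shows "e (\<Sum>b\<in>B. (e b - p w b) *\<^sub>R b) - p w (\<Sum>b\<in>B. (e b - p w b) *\<^sub>R b) =
    (\<Sum>b\<in>B. (p w b - e b)\<^sup>2)"
proof -
  have "e (\<Sum>b\<in>B. (e b - p w b) *\<^sub>R b) = (\<Sum>b\<in>B. (e b - p w b) * e b)"
    by (rule lin_functional_on_sum[OF lin subspace_span \<open>finite B\<close> span_superset])
  moreover have "p w (\<Sum>b\<in>B. (e b - p w b) *\<^sub>R b) = (\<Sum>b\<in>B. (e b - p w b) * p w b)"
    by (simp add: bounded_bilinear.sum_right[OF bb] bounded_bilinear.scaleR_right[OF bb])
  ultimately show ?thesis
    by (simp add: sum_subtractf[symmetric] power2_eq_square algebra_simps)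
qed

lemma norming_extension:
  fixes p :: "'u::real_normed_vector \<Rightarrow> 'v::real_normed_vector \<Rightarrow> real"
  assumes bb: "bounded_bilinear p" and finB: "finite B" and finT: "finite T"
    and TW: "T \<subseteq> W \<inter> cball 0 1" and W: "subspace W"
    and norming: "norming_on p c T (span B)"
    and lin: "lin_functional_on (span B) e"
    and bound: "\<And>x. x \<in> span B \<Longrightarrow> \<bar>e x\<bar> \<le> M * norm x"
    and "0 \<le> c" "0 \<le> M"
  shows "\<exists>w\<in>W. norm w \<le> c * M \<and> (\<forall>x\<in>span B. p w x = e x)"
proof -
  let ?H = "convex hull (T \<union> uminus ` T)"
  let ?C = "(\<lambda>u. (c * M) *\<^sub>R u) ` ?H"
  have "?H \<subseteq> W \<inter> cball 0 1"
    using TW subspace_neg[OF W] subspace_imp_convex[OF W] by (intro hull_minimal convex_Int) auto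
  then have C: "norm w \<le> c * M \<and> w \<in> W" if "w \<in> ?C" for w
    using that \<open>0 \<le> c\<close> \<open>0 \<le> M\<close> subspace_scale[OF W] by (auto simp: mult_left_le)
  have "compact ?C" using finT by (intro compact_scaling finite_imp_compact_convex_hull) simp
  have "T \<noteq> {}" using norming span_zero unfolding norming_on_def by blast
  then have "?C \<noteq> {}" by (auto simp: hull_inc)
  define Q where "Q w = (\<Sum>b\<in>B. (p w b - e b)\<^sup>2)" for w
  have "continuous_on ?C Q" unfolding Q_def
    by (intro continuous_intros linear_continuous_on bounded_bilinear.bounded_linear_left[OF bb])
  then obtain w0 where w0: "w0 \<in> ?C" "\<And>w. w \<in> ?C \<Longrightarrow> Q w0 \<le> Q w"
    using continuous_attains_inf[OF \<open>compact ?C\<close> \<open>?C \<noteq> {}\<close>] by blast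
  define x where "x = (\<Sum>b\<in>B. (e b - p w0 b) *\<^sub>R b)"
  have x: "x \<in> span B" unfolding x_def by (intro span_sum span_scale span_base)
  have px: "p w x = (\<Sum>b\<in>B. (e b - p w0 b) * p w b)" for w
    unfolding x_def
    by (simp add: bounded_bilinear.sum_right[OF bb] bounded_bilinear.scaleR_right[OF bb])
  have residual: "e x - p w0 x = Q w0"
    unfolding x_def Q_def by (rule least_squares_residual[OF bb finB lin])
  \<comment> \<open>the residual x of the least-squares problem separates e from the candidates in ?C\<close>
  have variational: "p w x \<le> p w0 x" if "w \<in> ?C" for w
  proof -
    have "linear (\<lambda>w. p w b)" for b
      by (rule bounded_linear.linear[OF bounded_bilinear.bounded_linear_left[OF bb]])
    moreover have "convex ?C" by (intro convex_scaling convex_convex_hull)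
    ultimately have "0 \<le> (\<Sum>b\<in>B. (p w0 b - e b) * (p w b - p w0 b))"
      using least_squares_variational[of p, OF _ _ w0(1) that w0(2)[unfolded Q_def]] by blast
    then show ?thesis by (simp add: px sum_subtractf sum.distrib algebra_simps)
  qed
  obtain t where t: "t \<in> T \<union> uminus ` T" "e x \<le> p ((c * M) *\<^sub>R t) x"
    using norming_on_dominates[where e = e, OF bb norming x bound[OF x] \<open>0 \<le> M\<close>] by blast
  have "(c * M) *\<^sub>R t \<in> ?C" using t(1) by (intro imageI hull_inc)
  then have "Q w0 \<le> 0" using variational t(2) residual by fastforce
  then have "p w0 b = e b" if "b \<in> B" for b
    using that finB sum_nonneg_eq_0_iff[of B "\<lambda>b. (p w0 b - e b)\<^sup>2"] unfolding Q_def
    by (simp add: antisym sum_nonneg)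
  then show ?thesis using C[OF w0(1)] bilinear_eq_lin_functional_on_span[OF bb lin] by blast
qed

lemma norming_extension_dual_norm:
  fixes p :: "'u::real_normed_vector \<Rightarrow> 'v::real_normed_vector \<Rightarrow> real"
  assumes "bounded_bilinear p" and "finite B" and "finite T"
    and "T \<subseteq> W \<inter> cball 0 1" and "subspace W"
    and "norming_on p c T (span B)" and "0 \<le> c"
    and lin: "lin_functional_on (span B) e"
  shows "\<exists>w\<in>W. (\<forall>x\<in>span B. p w x = e x) \<and> norm w \<le> c * dual_norm_on (span B) e"
  using norming_extension[OF assms(1-6) lin dual_norm_on_bound(2)[OF \<open>finite B\<close> lin]
      \<open>0 \<le> c\<close> dual_norm_on_bound(1)[OF \<open>finite B\<close> lin]]
  by blast

lemma bdd_above_abs_bilinear: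
  fixes p :: "'u::real_normed_vector \<Rightarrow> 'v::real_normed_vector \<Rightarrow> real"
  assumes "bounded_bilinear p"
  shows "bdd_above {\<bar>p t x\<bar> | t. t \<in> W \<and> norm t \<le> 1}"
proof -
  obtain K where K: "\<And>a b. norm (p a b) \<le> norm a * norm b * K" "K > 0"
    using bounded_bilinear.pos_bounded[OF assms] by blast
  have "\<bar>p t x\<bar> \<le> norm x * K" if "norm t \<le> 1" for t
  proof -
    have "\<bar>p t x\<bar> \<le> norm t * norm x * K" using K(1)[of t x] by simp
    also have "\<dots> \<le> 1 * norm x * K" using that K(2) by (intro mult_right_mono) auto
    finally show ?thesis by simp
  qed
  then show ?thesis by (auto intro!: bdd_aboveI)
qed

lemma norm_le_Sup_if_norming:
  fixes p :: "'u::real_normed_vector \<Rightarrow> 'v::real_normed_vector \<Rightarrow> real"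
  assumes "bounded_bilinear p" and "T \<subseteq> W \<inter> cball 0 1"
    and "norming_on p c T X" and "x \<in> X" and "0 \<le> c"
  shows "norm x \<le> c * Sup {\<bar>p t x\<bar> | t. t \<in> W \<and> norm t \<le> 1}"
proof -
  obtain t where t: "t \<in> T" "norm x \<le> c * \<bar>p t x\<bar>"
    using assms(3,4) unfolding norming_on_def by blast
  have "t \<in> W" "norm t \<le> 1" using t(1) assms(2) by auto
  then have "\<bar>p t x\<bar> \<le> Sup {\<bar>p t x\<bar> | t. t \<in> W \<and> norm t \<le> 1}"
    by (intro cSup_upper[OF _ bdd_above_abs_bilinear[OF assms(1)]]) blast
  then show ?thesis using t(2) \<open>0 \<le> c\<close> by (meson mult_left_mono order_trans)
qed

section \<open>Biorthogonal systems\<close>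

(* An abstract FMD (E, F) in duality via pair.  The axioms are symmetric in E and F, which
   the sublocale swap below exploits: every result also holds with the roles exchanged. *)
locale biorthogonal_system =
  fixes pair :: "'u::real_normed_vector \<Rightarrow> 'v::real_normed_vector \<Rightarrow> real"
    and E :: "nat \<Rightarrow> 'v set" and F :: "nat \<Rightarrow> 'u set"
  assumes bounded_bilinear_pair: "bounded_bilinear pair"
    and abs_pair_le: "\<bar>pair t x\<bar> \<le> norm t * norm x"
    and E_finite_span: "\<exists>B. finite B \<and> E i = span B"
    and F_finite_span: "\<exists>S. finite S \<and> F i = span S"
    and E_0: "E 0 = {0}" and F_0: "F 0 = {0}"
    and pair_eq_0: "i \<noteq> j \<Longrightarrow> t \<in> F i \<Longrightarrow> x \<in> E j \<Longrightarrow> pair t x = 0"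
    and E_separates: "(\<And>i x. x \<in> E i \<Longrightarrow> pair t x = 0) \<Longrightarrow> t = 0"
    and F_separates: "(\<And>i t. t \<in> F i \<Longrightarrow> pair t x = 0) \<Longrightarrow> x = 0"
begin

abbreviation ES :: "nat set \<Rightarrow> 'v set" where "ES I \<equiv> span (\<Union>i\<in>I. E i)"
abbreviation FS :: "nat set \<Rightarrow> 'u set" where "FS I \<equiv> span (\<Union>i\<in>I. F i)"

lemma biorthogonal_system_swap: "biorthogonal_system (\<lambda>x t. pair t x) F E"
proof (rule biorthogonal_system.intro)
  show "bounded_bilinear (\<lambda>x t. pair t x)" by (rule bounded_bilinear.flip[OF bounded_bilinear_pair])
  show "\<bar>(\<lambda>x t. pair t x) x t\<bar> \<le> norm x * norm t" for x t
    using abs_pair_le[of t x] by (simp add: mult.commute)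
  show "\<exists>S. finite S \<and> F i = span S" for i by (rule F_finite_span)
  show "\<exists>B. finite B \<and> E i = span B" for i by (rule E_finite_span)
  show "F 0 = {0}" "E 0 = {0}" by (rule F_0, rule E_0)
  show "(\<lambda>x t. pair t x) x t = 0" if "i \<noteq> j" "x \<in> E i" "t \<in> F j" for i j x t
    using pair_eq_0[of j i t x] that by simp
  show "x = 0" if "\<And>i t. t \<in> F i \<Longrightarrow> (\<lambda>x t. pair t x) x t = 0" for x
    using F_separates that by simp
  show "t = 0" if "\<And>i x. x \<in> E i \<Longrightarrow> (\<lambda>x t. pair t x) x t = 0" for t
    using E_separates that by simp
qed

lemma pair_FS_ES_eq_0:
  assumes "I \<inter> J = {}" and "t \<in> FS I" and "x \<in> ES J"
  shows "pair t x = 0"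
proof -
  note bb = bounded_bilinear_pair
  have "pair s x = 0" if s: "s \<in> F i" "i \<in> I" for s i
  proof (rule span_induct[where P = "\<lambda>x. pair s x = 0", OF \<open>x \<in> ES J\<close>])
    show "subspace {x. pair s x = 0}"
      by (rule linear_subspace_kernel)
        (simp add: bounded_bilinear.bounded_linear_right[OF bb] bounded_linear.linear)
    fix y assume "y \<in> (\<Union>j\<in>J. E j)"
    then obtain j where "j \<in> J" "y \<in> E j" by blast
    moreover have "i \<noteq> j" using \<open>j \<in> J\<close> s(2) assms(1) by blast
    ultimately show "pair s y = 0" using pair_eq_0 s(1) by simp
  qed
  show ?thesis
  proof (rule span_induct[where P = "\<lambda>t. pair t x = 0", OF \<open>t \<in> FS I\<close>])
    show "subspace {t. pair t x = 0}"
      by (rule linear_subspace_kernel)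
        (simp add: bounded_bilinear.bounded_linear_left[OF bb] bounded_linear.linear)
  qed (use \<open>\<And>s i. s \<in> F i \<Longrightarrow> i \<in> I \<Longrightarrow> pair s x = 0\<close> in auto)
qed

lemma FS_mem_if_vanishes:
  assumes "I \<inter> J = {}" and "t \<in> FS (I \<union> J)"
    and vanishes: "\<And>i x. i \<in> I \<Longrightarrow> x \<in> E i \<Longrightarrow> pair t x = 0"
  shows "t \<in> FS J"
proof -
  obtain u v where uv: "t = u + v" "u \<in> FS I" "v \<in> FS J"
    using assms(2) by (auto simp: UN_Un span_Un)
  have "u = 0"
  proof (rule E_separates)
    fix i x assume x: "x \<in> E i"
    then have "x \<in> ES {i}" by (simp add: span_base)
    show "pair u x = 0"
    proof (cases "i \<in> I")
      case True
      then have "pair v x = 0" using pair_FS_ES_eq_0[OF _ uv(3) \<open>x \<in> ES {i}\<close>] assms(1) by blast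
      moreover have "pair t x = pair u x + pair v x"
        using uv(1) by (simp add: bounded_bilinear.add_left[OF bounded_bilinear_pair])
      ultimately show ?thesis using vanishes[OF True x] by simp
    next
      case False
      then show ?thesis using pair_FS_ES_eq_0[OF _ uv(2) \<open>x \<in> ES {i}\<close>] by blast
    qed
  qed
  then show ?thesis using uv by simp
qed

lemma ES_finite_span: "\<exists>B. finite B \<and> ES I = span B" if "finite I"
proof -
  obtain B where B: "\<And>i. finite (B i) \<and> E i = span (B i)" using E_finite_span by metis
  then have "ES I = span (\<Union>i\<in>I. B i)" using span_UN_span[of B I] by simp
  then show ?thesis using B that by blast
qed

end

sublocale biorthogonal_system \<subseteq> swap: biorthogonal_system "\<lambda>x t. pair t x" F E
  by (rule biorthogonal_system_swap)

context biorthogonal_system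
begin

lemma F_extends_functional:
  assumes "lin_functional_on (E i) e"
  shows "\<exists>w\<in>F i. \<forall>x\<in>E i. pair w x = e x"
proof -
  note bb = bounded_bilinear_pair
  obtain B where B: "finite B" "E i = span B" using E_finite_span by blast
  have sub: "subspace (F i)" using F_finite_span by (metis subspace_span)
  have "\<exists>t\<in>F i. 1 < 1 * \<bar>pair t x\<bar>" if x: "x \<in> span B" "norm x = 1" for x
  proof -
    obtain j t where t: "t \<in> F j" "pair t x \<noteq> 0" using F_separates x(2) by force
    then have "j = i" using pair_eq_0 x(1) B(2) by blast
    let ?t = "(2 / \<bar>pair t x\<bar>) *\<^sub>R t"
    have "?t \<in> F i" using t(1) \<open>j = i\<close> subspace_scale[OF sub] by blast
    moreover have "pair ?t x = 2 / \<bar>pair t x\<bar> * pair t x"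
      by (simp add: bounded_bilinear.scaleR_left[OF bb])
    ultimately show ?thesis using t(2) by (intro bexI[of _ ?t]) (simp_all add: abs_mult)
  qed
  then obtain S where S: "S \<subseteq> F i" "finite S" "norming_on pair 1 S (span B)"
    using finite_norming_subset[OF bb B(1) subspace_0[OF sub]] by blast
  define R where "R = Max (insert 1 (norm ` S))"
  have R: "1 \<le> R" "\<And>t. t \<in> S \<Longrightarrow> norm t \<le> R" using S(2) by (auto simp: R_def)
  let ?S = "(\<lambda>t. (1 / R) *\<^sub>R t) ` S"
  have unit: "?S \<subseteq> F i \<inter> cball 0 1" using S(1) R subspace_scale[OF sub] by (auto simp: field_simps)
  have norming: "norming_on pair R ?S (span B)"
    unfolding norming_on_def
  proof
    fix x assume "x \<in> span B"
    then obtain t where "t \<in> S" "norm x \<le> \<bar>pair t x\<bar>" using S(3) unfolding norming_on_def by auto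
    moreover have "\<bar>pair t x\<bar> = R * \<bar>pair ((1 / R) *\<^sub>R t) x\<bar>"
      using R(1) by (simp add: bounded_bilinear.scaleR_left[OF bb] abs_mult)
    ultimately show "\<exists>s\<in>?S. norm x \<le> R * \<bar>pair s x\<bar>" by auto
  qed
  have lin: "lin_functional_on (span B) e" using assms B(2) by simp
  obtain w where "w \<in> F i" "\<forall>x\<in>span B. pair w x = e x"
    using norming_extension_dual_norm[OF bb B(1) finite_imageI[OF S(2)] unit sub norming _ lin] R(1)
    by auto
  then show ?thesis using B(2) by auto
qed

definition finitely_norms :: "real \<Rightarrow> nat \<Rightarrow> nat \<Rightarrow> bool" where
  "finitely_norms c M N \<longleftrightarrow>
     (\<exists>T. finite T \<and> T \<subseteq> FS {..N} \<inter> cball 0 1 \<and> norming_on pair c T (ES {..M}))"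

lemma finitely_norms_mono:
  assumes "finitely_norms c M N" and "N \<le> N'"
  shows "finitely_norms c M N'"
proof -
  have "FS {..N} \<subseteq> FS {..N'}" using assms(2) by (intro span_mono UN_mono) auto
  then show ?thesis using assms(1) unfolding finitely_norms_def by blast
qed

lemma finitely_norms_0: "finitely_norms c 0 N"
  unfolding finitely_norms_def norming_on_def
  by (intro exI[of _ "{0}"])
    (auto simp: E_0 span_zero bounded_bilinear.zero_left[OF bounded_bilinear_pair])

lemma finitely_norms_correction:
  assumes "finitely_norms c L L'" and "0 \<le> c" and "norm f \<le> 1"
  shows "\<exists>g\<in>FS {..L'}. norm g \<le> c \<and> (\<forall>y\<in>ES {..L}. pair g y = pair f y)"
proof -
  note bb = bounded_bilinear_pair
  obtain T0 where T0: "finite T0" "T0 \<subseteq> FS {..L'} \<inter> cball 0 1" "norming_on pair c T0 (ES {..L})"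
    using assms(1) unfolding finitely_norms_def by blast
  obtain B where B: "finite B" "ES {..L} = span B" using ES_finite_span by blast
  have "\<exists>g\<in>FS {..L'}. norm g \<le> c * 1 \<and> (\<forall>y\<in>span B. pair g y = pair f y)"
  proof (rule norming_extension[OF bb B(1) T0(1) _ subspace_span])
    show "T0 \<subseteq> FS {..L'} \<inter> cball 0 1" "norming_on pair c T0 (span B)" using T0 B(2) by auto
    show "lin_functional_on (span B) (pair f)"
      by (simp add: lin_functional_on_def bounded_bilinear.add_right[OF bb]
          bounded_bilinear.scaleR_right[OF bb])
    show "\<bar>pair f y\<bar> \<le> 1 * norm y" for y
      using abs_pair_le[of f y] mult_right_mono[OF assms(3), of "norm y"] by simp
  qed (use \<open>0 \<le> c\<close> in auto)
  then show ?thesis using B(2) by simp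
qed

lemma FS_diff_mem_if_agrees:
  assumes "f \<in> FS {..N}" and "g \<in> FS {..N}" and "\<forall>y\<in>ES {..L}. pair g y = pair f y"
  shows "f - g \<in> FS {L<..N}"
proof -
  have "FS {..N} \<subseteq> FS ({..L} \<union> {L<..N})" by (intro span_mono UN_mono) auto
  then have "f - g \<in> FS ({..L} \<union> {L<..N})" using assms(1,2) by (auto intro: span_diff)
  then show ?thesis
  proof (rule FS_mem_if_vanishes[rotated])
    fix i x assume "i \<in> {..L}" "x \<in> E i"
    then have "x \<in> ES {..L}" by (auto intro: span_base)
    then show "pair (f - g) x = 0"
      using assms(3) by (simp add: bounded_bilinear.diff_left[OF bounded_bilinear_pair])
  qed auto
qed

lemma finitely_norms_gap:
  assumes low: "finitely_norms c L L'" and high: "finitely_norms c M N"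
    and "L' \<le> N" and "0 \<le> c"
  shows "\<exists>T. finite T \<and> T \<subseteq> FS {L<..N} \<inter> cball 0 1 \<and> norming_on pair (c * (1 + c)) T (ES {L'<..M})"
proof -
  note bb = bounded_bilinear_pair
  obtain T where T: "finite T" "T \<subseteq> FS {..N} \<inter> cball 0 1" "norming_on pair c T (ES {..M})"
    using high unfolding finitely_norms_def by blast
  have "\<exists>g\<in>FS {..L'}. norm g \<le> c \<and> (\<forall>y\<in>ES {..L}. pair g y = pair f y)" if "f \<in> T" for f
    using finitely_norms_correction[OF low \<open>0 \<le> c\<close>] that T(2) by auto
  then obtain G where G: "\<And>f. f \<in> T \<Longrightarrow>
      G f \<in> FS {..L'} \<and> norm (G f) \<le> c \<and> (\<forall>y\<in>ES {..L}. pair (G f) y = pair f y)"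
    by metis
  \<comment> \<open>f - G f vanishes on ES {..L}, hence lies in FS {L<..N}, and agrees with f on ES {L'<..M}\<close>
  define h where "h f = (1 / (1 + c)) *\<^sub>R (f - G f)" for f
  have h: "h f \<in> FS {L<..N} \<inter> cball 0 1" if "f \<in> T" for f
  proof
    have "FS {..L'} \<subseteq> FS {..N}" using \<open>L' \<le> N\<close> by (intro span_mono UN_mono) auto
    then have "f - G f \<in> FS {L<..N}"
      using FS_diff_mem_if_agrees T(2) that G[OF that] by blast
    then show "h f \<in> FS {L<..N}" unfolding h_def by (rule span_scale)
    have "norm (f - G f) \<le> 1 + c"
      using norm_triangle_ineq4[of f "G f"] T(2) that G[OF that] by auto
    then show "h f \<in> cball 0 1" using \<open>0 \<le> c\<close> by (simp add: h_def divide_le_eq_1)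
  qed
  have "norming_on pair (c * (1 + c)) (h ` T) (ES {L'<..M})"
    unfolding norming_on_def
  proof
    fix x assume x: "x \<in> ES {L'<..M}"
    then have "x \<in> ES {..M}" by (rule span_mono[THEN subsetD, rotated]) auto
    then obtain f where f: "f \<in> T" "norm x \<le> c * \<bar>pair f x\<bar>"
      using T(3) unfolding norming_on_def by blast
    have "{..L'} \<inter> {L'<..M} = {}" by auto
    then have "pair (G f) x = 0" using pair_FS_ES_eq_0[OF _ _ x] G[OF f(1)] by blast
    then have "pair f x = (1 + c) * pair (h f) x"
      using \<open>0 \<le> c\<close>
      by (simp add: h_def bounded_bilinear.scaleR_left[OF bb] bounded_bilinear.diff_left[OF bb])
    then show "\<exists>t\<in>h ` T. norm x \<le> c * (1 + c) * \<bar>pair t x\<bar>"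
      using f \<open>0 \<le> c\<close> by (intro bexI[of _ "h f"]) (auto simp: abs_mult mult.assoc)
  qed
  then show ?thesis using h T(1) by (intro exI[of _ "h ` T"]) auto
qed

lemma finitely_norms_blocks:
  assumes "\<nu> 0 = 0" and "strict_mono \<nu>" and chain: "\<forall>k. finitely_norms c (\<nu> k) (\<nu> (Suc k))"
    and "0 \<le> c" and "c * (1 + c) \<le> K" and "m \<le> n"
  shows "\<exists>T. finite T \<and> T \<subseteq> FS {\<nu> (m - 2)<..\<nu> (n + 1)} \<inter> cball 0 1 \<and>
    norming_on pair K T (ES {\<nu> (m - 1)<..\<nu> n})"
proof -
  have low: "finitely_norms c (\<nu> (m - 2)) (\<nu> (m - 1))"
  proof (cases "2 \<le> m")
    case True
    then have "m - 1 = Suc (m - 2)" by simp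
    then show ?thesis using chain[rule_format, of "m - 2"] by simp
  next
    case False
    then have "m - 2 = 0" "m - 1 = 0" by simp_all
    then show ?thesis using finitely_norms_0 \<open>\<nu> 0 = 0\<close> by simp
  qed
  have "m - 1 \<le> n + 1" using \<open>m \<le> n\<close> by simp
  then have le: "\<nu> (m - 1) \<le> \<nu> (n + 1)" by (rule strict_mono_leD[OF assms(2)])
  have high: "finitely_norms c (\<nu> n) (\<nu> (n + 1))" using chain by simp
  obtain T where "finite T" "T \<subseteq> FS {\<nu> (m - 2)<..\<nu> (n + 1)} \<inter> cball 0 1"
      "norming_on pair (c * (1 + c)) T (ES {\<nu> (m - 1)<..\<nu> n})"
    using finitely_norms_gap[OF low high le \<open>0 \<le> c\<close>] by blast
  with norming_on_mono[OF _ assms(5)] show ?thesis by blast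
qed

lemma blocks_extension:
  assumes "\<nu> 0 = 0" and "strict_mono \<nu>" and "\<forall>k. finitely_norms c (\<nu> k) (\<nu> (Suc k))"
    and "0 \<le> c" and "c * (1 + c) \<le> K" and "m \<le> n"
    and lin: "lin_functional_on (ES {\<nu> (m - 1)<..\<nu> n}) e"
  shows "\<exists>w\<in>FS {\<nu> (m - 2)<..\<nu> (n + 1)}. (\<forall>x\<in>ES {\<nu> (m - 1)<..\<nu> n}. pair w x = e x) \<and>
    norm w \<le> K * dual_norm_on (ES {\<nu> (m - 1)<..\<nu> n}) e"
proof -
  obtain T where T: "finite T" "T \<subseteq> FS {\<nu> (m - 2)<..\<nu> (n + 1)} \<inter> cball 0 1"
      "norming_on pair K T (ES {\<nu> (m - 1)<..\<nu> n})"
    using finitely_norms_blocks[OF assms(1-6)] by blast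
  obtain B where B: "finite B" "ES {\<nu> (m - 1)<..\<nu> n} = span B" using ES_finite_span by blast
  have "0 \<le> K" using assms(4,5) mult_nonneg_nonneg[of c "1 + c"] by linarith
  from norming_extension_dual_norm[OF bounded_bilinear_pair B(1) T(1,2) subspace_span _ this]
  show ?thesis using T(3) lin unfolding B(2) by blast
qed

lemma blocks_norm_le_Sup:
  assumes "\<nu> 0 = 0" and "strict_mono \<nu>" and "\<forall>k. finitely_norms c (\<nu> k) (\<nu> (Suc k))"
    and "0 \<le> c" and "c * (1 + c) \<le> K" and "m \<le> n"
    and "x \<in> ES {\<nu> (m - 1)<..\<nu> n}"
  shows "norm x \<le> K * Sup {\<bar>pair t x\<bar> | t. t \<in> FS {\<nu> (m - 2)<..\<nu> (n + 1)} \<and> norm t \<le> 1}"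
proof -
  obtain T where T: "finite T" "T \<subseteq> FS {\<nu> (m - 2)<..\<nu> (n + 1)} \<inter> cball 0 1"
      "norming_on pair K T (ES {\<nu> (m - 1)<..\<nu> n})"
    using finitely_norms_blocks[OF assms(1-6)] by blast
  have "0 \<le> K" using assms(4,5) mult_nonneg_nonneg[of c "1 + c"] by linarith
  then show ?thesis using norm_le_Sup_if_norming[OF bounded_bilinear_pair T(2,3) assms(7)] by blast
qed

end

lemma exists_strict_mono_chain:
  assumes "\<And>M. \<exists>N>M. R M N"
  shows "\<exists>\<nu>. \<nu> 0 = 0 \<and> strict_mono \<nu> \<and> (\<forall>k. R (\<nu> k) (\<nu> (Suc k)))"
proof -
  obtain \<nu> where "\<forall>k. (k = 0 \<longrightarrow> \<nu> k = 0) \<and> \<nu> k < \<nu> (Suc k) \<and> R (\<nu> k) (\<nu> (Suc k))"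
    using dependent_nat_choice[of "\<lambda>k n. k = 0 \<longrightarrow> n = 0" "\<lambda>_ m n. m < n \<and> R m n"] assms by auto
  then show ?thesis by (auto simp: strict_mono_Suc_iff)
qed

locale norming_system = biorthogonal_system +
  assumes F_norming: "x \<in> span (\<Union>i. E i) \<Longrightarrow>
      norm x \<le> Sup {\<bar>pair t x\<bar> | t. t \<in> span (\<Union>i. F i) \<and> norm t \<le> 1}"
    and E_norming: "t \<in> span (\<Union>i. F i) \<Longrightarrow>
      norm t \<le> Sup {\<bar>pair t x\<bar> | x. x \<in> span (\<Union>i. E i) \<and> norm x \<le> 1}"
begin

lemma norming_system_swap: "norming_system (\<lambda>x t. pair t x) F E"
  by (intro norming_system.intro biorthogonal_system_swap norming_system_axioms.intro)
    (simp_all add: F_norming E_norming)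

lemma ex_finitely_norms:
  assumes "1 < c"
  shows "\<exists>N. finitely_norms c M N"
proof -
  obtain B where B: "finite B" "ES {..M} = span B" using ES_finite_span by blast
  let ?T = "span (\<Union>i. F i) \<inter> cball 0 1"
  have large: "\<exists>t\<in>?T. 1 < c * \<bar>pair t x\<bar>" if x: "x \<in> span B" "norm x = 1" for x
  proof -
    let ?A = "{\<bar>pair t x\<bar> | t. t \<in> span (\<Union>i. F i) \<and> norm t \<le> 1}"
    have "x \<in> span (\<Union>i. E i)" using x(1) B(2) span_mono[of "\<Union>i\<le>M. E i" "\<Union>i. E i"] by auto
    then have "1 \<le> Sup ?A" using F_norming x(2) by fastforce
    moreover have "1 / c < 1" using \<open>1 < c\<close> by simp
    ultimately have "1 / c < Sup ?A" by linarith
    moreover have "?A \<noteq> {}" using span_zero by fastforce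
    ultimately obtain a where "a \<in> ?A" "1 / c < a"
      using less_cSup_iff[OF _ bdd_above_abs_bilinear[OF bounded_bilinear_pair]] by blast
    then show ?thesis using \<open>1 < c\<close> by (auto simp: field_simps)
  qed
  have "0 \<in> ?T" by (simp add: span_zero)
  from finite_norming_subset[OF bounded_bilinear_pair B(1) this large]
  obtain S where S: "S \<subseteq> ?T" "finite S" "norming_on pair c S (span B)" by blast
  moreover obtain N where "S \<subseteq> FS {..N}" using finite_subset_span_UN_atMost[OF S(2)] S(1) by blast
  ultimately have "finite S \<and> S \<subseteq> FS {..N} \<inter> cball 0 1 \<and> norming_on pair c S (ES {..M})"
    using B(2) by auto
  then show ?thesis unfolding finitely_norms_def by blast
qed

end

sublocale norming_system \<subseteq> swap: norming_system "\<lambda>x t. pair t x" F E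
  by (rule norming_system_swap)

context norming_system
begin

lemma ex_norming_blocking:
  assumes "1 < c"
  shows "\<exists>\<nu>. \<nu> 0 = 0 \<and> strict_mono \<nu> \<and>
    (\<forall>k. finitely_norms c (\<nu> k) (\<nu> (Suc k)) \<and> swap.finitely_norms c (\<nu> k) (\<nu> (Suc k)))"
proof (rule exists_strict_mono_chain)
  fix M
  obtain N1 N2 where "finitely_norms c M N1" "swap.finitely_norms c M N2"
    using ex_finitely_norms swap.ex_finitely_norms \<open>1 < c\<close> by blast
  moreover have "N1 \<le> max (Suc M) (max N1 N2)" "N2 \<le> max (Suc M) (max N1 N2)" by simp_all
  ultimately have "finitely_norms c M (max (Suc M) (max N1 N2))"
      "swap.finitely_norms c M (max (Suc M) (max N1 N2))"
    using finitely_norms_mono swap.finitely_norms_mono by blast+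
  then show "\<exists>N>M. finitely_norms c M N \<and> swap.finitely_norms c M N"
    by (intro exI[of _ "max (Suc M) (max N1 N2)"]) auto
qed

end

section \<open>Markushevich decompositions\<close>

lemma finite_span_if_separated:
  fixes p :: "'u::real_vector \<Rightarrow> 'v \<Rightarrow> real"
  assumes lin: "\<And>b. linear (\<lambda>w. p w b)" and "finite B" and "subspace V"
    and "\<And>v. v \<in> V \<Longrightarrow> \<forall>b\<in>B. p v b = 0 \<Longrightarrow> v = 0"
  shows "\<exists>S. finite S \<and> V = span S"
  using \<open>finite B\<close> \<open>subspace V\<close> assms(4)
proof (induction B arbitrary: V rule: finite_induct)
  case empty
  then have "V = span {}" using subspace_0 by auto
  then show ?case by blast
next
  case (insert b B)
  let ?V0 = "V \<inter> {v. p v b = 0}"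
  have "subspace ?V0" using insert.prems(1) linear_subspace_kernel[OF lin] by (rule subspace_inter)
  then obtain S0 where S0: "finite S0" "?V0 = span S0" using insert.IH insert.prems(2) by force
  show ?case
  proof (cases "\<exists>v1\<in>V. p v1 b \<noteq> 0")
    case True
    then obtain v1 where v1: "v1 \<in> V" "p v1 b \<noteq> 0" by blast
    have "V = span (insert v1 S0)"
    proof
      show "span (insert v1 S0) \<subseteq> V"
        using v1(1) S0(2) span_superset[of S0] insert.prems(1) by (intro span_minimal) auto
      show "V \<subseteq> span (insert v1 S0)"
      proof
        fix v assume v: "v \<in> V"
        let ?k = "p v b / p v1 b"
        have "v - ?k *\<^sub>R v1 \<in> ?V0"
          using v v1 insert.prems(1) linear_diff[OF lin] linear_scale[OF lin]
          by (simp add: subspace_diff subspace_scale)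
        then have "v - ?k *\<^sub>R v1 \<in> span (insert v1 S0)"
          using S0(2) span_mono[of S0 "insert v1 S0"] by auto
        then show "v \<in> span (insert v1 S0)"
          by (metis diff_add_cancel span_add span_base span_scale insertI1)
      qed
    qed
    then show ?thesis using S0(1) by blast
  next
    case False
    then have "V = ?V0" by auto
    then show ?thesis using S0 by auto
  qed
qed

definition seq0 :: "(nat \<Rightarrow> 'a::real_vector set) \<Rightarrow> nat \<Rightarrow> 'a set" where
  "seq0 E' i = (if i = 0 then {0} else E' i)"

lemma span_UN_eq_span_UN_atLeast_1:
  fixes A B :: "nat \<Rightarrow> 'a::real_vector set"
  assumes "A 0 \<subseteq> {0}" and "\<And>i. 1 \<le> i \<Longrightarrow> A i = B i"
  shows "span (\<Union>i. A i) = span (\<Union>i\<in>{1..}. B i)"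
proof -
  have "A i \<subseteq> insert 0 (\<Union>i\<in>{1..}. B i)" for i
  proof (cases "i = 0")
    case True
    then show ?thesis using assms(1) by auto
  next
    case False
    then have "i \<in> {1..}" by simp
    then show ?thesis using assms(2)[of i] by blast
  qed
  then have "(\<Union>i. A i) \<subseteq> insert 0 (\<Union>i\<in>{1..}. B i)" by blast
  then have "span (\<Union>i. A i) \<subseteq> span (\<Union>i\<in>{1..}. B i)" using span_mono span_insert_0 by metis
  moreover have "(\<Union>i\<in>{1..}. B i) \<subseteq> (\<Union>i. A i)" using assms(2) by auto
  ultimately show ?thesis using span_mono by blast
qed

lemma FMD_finite_span: "FMD E \<Longrightarrow> 1 \<le> k \<Longrightarrow> \<exists>B. finite B \<and> E k = span B"
  unfolding FMD_def fin_dim_subspace_def by (elim conjE) blast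

lemma FMD_dense: "FMD E \<Longrightarrow> closure (span (\<Union>k\<in>{1..}. E k)) = UNIV"
  unfolding FMD_def by (elim conjE)

lemma FMD_total: "FMD E \<Longrightarrow> (\<And>k f. 1 \<le> k \<Longrightarrow> f \<in> biorth E k \<Longrightarrow> blinfun_apply f x = 0) \<Longrightarrow> x = 0"
  unfolding FMD_def by (elim conjE) blast

lemma blinfun_eq_0_on_closure_span:
  assumes "\<And>y. y \<in> A \<Longrightarrow> blinfun_apply f y = 0" and "x \<in> closure (span A)"
  shows "blinfun_apply f x = 0"
proof -
  have "closed {x. blinfun_apply f x = 0}" by (intro closed_Collect_eq continuous_intros)
  moreover have "span A \<subseteq> {x. blinfun_apply f x = 0}"
    using assms(1)
    by (intro span_minimal linear_subspace_kernel bounded_linear.linear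
        blinfun.bounded_linear_right) auto
  ultimately have "closure (span A) \<subseteq> {x. blinfun_apply f x = 0}" by (rule closure_minimal[rotated])
  then show ?thesis using assms(2) by blast
qed

lemma FMD_functional_eq_0:
  assumes "FMD E'" and vanishes: "\<And>i x. 1 \<le> i \<Longrightarrow> x \<in> E' i \<Longrightarrow> blinfun_apply f x = 0"
  shows "f = 0"
proof (rule blinfun_eqI)
  fix x
  have "x \<in> closure (span (\<Union>k\<in>{1..}. E' k))" using FMD_dense[OF assms(1)] by simp
  then have "blinfun_apply f x = 0"
    by (rule blinfun_eq_0_on_closure_span[rotated]) (auto intro: vanishes)
  then show "blinfun_apply f x = blinfun_apply 0 x" by simp
qed

lemma subspace_biorth: "subspace (biorth E k)"
  unfolding subspace_def biorth_def by (auto simp: blinfun.bilinear_simps)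

lemma biorth_finite_span:
  assumes "FMD E'" and "1 \<le> i"
  shows "\<exists>S. finite S \<and> biorth E' i = span S"
proof -
  obtain B where B: "finite B" "E' i = span B" using FMD_finite_span[OF assms] by blast
  show ?thesis
  proof (rule finite_span_if_separated[OF _ B(1) subspace_biorth])
    show "linear (\<lambda>f. blinfun_apply f b)" for b
      by (rule bounded_linear.linear[OF blinfun.bounded_linear_left])
    fix f assume f: "f \<in> biorth E' i" and "\<forall>b\<in>B. blinfun_apply f b = 0"
    then have "E' i \<subseteq> {x. blinfun_apply f x = 0}" unfolding B(2)
      by (intro span_minimal linear_subspace_kernel bounded_linear.linear
          blinfun.bounded_linear_right) auto
    show "f = 0"
    proof (rule FMD_functional_eq_0[OF assms(1)])
      fix j x assume "1 \<le> j" "x \<in> E' j"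
      then show "blinfun_apply f x = 0"
        using f \<open>E' i \<subseteq> {x. blinfun_apply f x = 0}\<close> unfolding biorth_def by (cases "j = i") auto
    qed
  qed
qed

lemma FMD_biorthogonal_system:
  assumes "FMD E'"
  shows "biorthogonal_system blinfun_apply (seq0 E') (biorth0 E')"
proof (rule biorthogonal_system.intro)
  show "bounded_bilinear blinfun_apply" by (rule bounded_bilinear_blinfun_apply)
  show "\<bar>blinfun_apply f x\<bar> \<le> norm f * norm x" for f x using norm_blinfun[of f x] by simp
  show "\<exists>B. finite B \<and> seq0 E' i = span B" for i
  proof (cases "i = 0")
    case True
    then show ?thesis by (intro exI[of _ "{}"]) (simp add: seq0_def)
  next
    case False
    then show ?thesis using FMD_finite_span[OF assms, of i] by (simp add: seq0_def)
  qed
  show "\<exists>S. finite S \<and> biorth0 E' i = span S" for i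
  proof (cases "i = 0")
    case True
    then show ?thesis by (intro exI[of _ "{}"]) (simp add: biorth0_def)
  next
    case False
    then show ?thesis using biorth_finite_span[OF assms, of i] by (simp add: biorth0_def)
  qed
  show "seq0 E' 0 = {0}" "biorth0 E' 0 = {0}" by (simp_all add: seq0_def biorth0_def)
  show "blinfun_apply f x = 0" if "i \<noteq> j" "f \<in> biorth0 E' i" "x \<in> seq0 E' j" for i j f x
    using that by (auto simp: seq0_def biorth0_def biorth_def Suc_le_eq split: if_splits)
  show "f = 0" if "\<And>i x. x \<in> seq0 E' i \<Longrightarrow> blinfun_apply f x = 0" for f
  proof (rule FMD_functional_eq_0[OF assms])
    fix i x assume "1 \<le> i" "x \<in> E' i"
    then show "blinfun_apply f x = 0" using that[of x i] by (simp add: seq0_def)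
  qed
  show "x = 0" if killed: "\<And>i f. f \<in> biorth0 E' i \<Longrightarrow> blinfun_apply f x = 0" for x
  proof (rule FMD_total[OF assms])
    fix k f assume "1 \<le> k" "f \<in> biorth E' k"
    then have "f \<in> biorth0 E' k" by (simp add: biorth0_def)
    then show "blinfun_apply f x = 0" by (rule killed)
  qed
qed

lemma norm_blinfun_le_Sup_dense_span:
  fixes t :: "'a::real_normed_vector \<Rightarrow>\<^sub>L real"
  assumes dense: "closure (span A) = UNIV"
  shows "norm t \<le> Sup {\<bar>blinfun_apply t x\<bar> | x. x \<in> span A \<and> norm x \<le> 1}"
proof -
  let ?S = "Sup {\<bar>blinfun_apply t x\<bar> | x. x \<in> span A \<and> norm x \<le> 1}"
  have bdd: "bdd_above {\<bar>blinfun_apply t x\<bar> | x. x \<in> span A \<and> norm x \<le> 1}"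
    using bdd_above_abs_bilinear[OF bounded_bilinear.flip[OF bounded_bilinear_blinfun_apply],
        where x = t and W = "span A"]
    by simp
  have le_S: "\<bar>blinfun_apply t y\<bar> \<le> ?S * norm y" if "y \<in> span A" for y
  proof (cases "y = 0")
    case False
    have "(1 / norm y) *\<^sub>R y \<in> span A" using that by (simp add: span_scale)
    then have "\<bar>blinfun_apply t ((1 / norm y) *\<^sub>R y)\<bar> \<le> ?S"
      using False by (intro cSup_upper[OF _ bdd]) fastforce
    then show ?thesis using False by (simp add: blinfun.scaleR_right abs_mult field_simps)
  qed simp
  have "0 \<le> ?S" using le_S[of 0] span_zero
    by (intro cSup_upper2[OF _ _ bdd, of 0]) force+
  then show ?thesis
  proof (rule norm_blinfun_bound)
    fix x
    have "span A \<subseteq> {x. \<bar>blinfun_apply t x\<bar> \<le> ?S * norm x}" using le_S by blast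
    then have "closure (span A) \<subseteq> {x. \<bar>blinfun_apply t x\<bar> \<le> ?S * norm x}"
      by (rule closure_minimal) (intro closed_Collect_le continuous_intros)
    then show "norm (blinfun_apply t x) \<le> ?S * norm x" using dense by auto
  qed
qed

lemma FMD_norming_system:
  assumes "FMD E'" and "one_norming E'"
  shows "norming_system blinfun_apply (seq0 E') (biorth0 E')"
proof (rule norming_system.intro[OF FMD_biorthogonal_system[OF assms(1)]],
    rule norming_system_axioms.intro)
  have spanF: "span (\<Union>i. biorth0 E' i) = span (\<Union>k\<in>{1..}. biorth E' k)"
    by (rule span_UN_eq_span_UN_atLeast_1) (auto simp: biorth0_def)
  fix x
  let ?A = "{blinfun_apply f x | f. f \<in> span (\<Union>k\<in>{1..}. biorth E' k) \<and> norm f \<le> 1}"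
  let ?B = "{\<bar>blinfun_apply f x\<bar> | f. f \<in> span (\<Union>k\<in>{1..}. biorth E' k) \<and> norm f \<le> 1}"
  have "norm x \<le> Sup ?A" using assms(2) unfolding one_norming_def by blast
  also have "Sup ?A \<le> Sup ?B"
  proof (rule cSup_mono)
    show "?A \<noteq> {}" using span_zero by fastforce
    show "bdd_above ?B" by (rule bdd_above_abs_bilinear[OF bounded_bilinear_blinfun_apply])
  qed force
  finally show "norm x \<le> Sup {\<bar>blinfun_apply f x\<bar> | f. f \<in> span (\<Union>i. biorth0 E' i) \<and> norm f \<le> 1}"
    unfolding spanF .
next
  have spanE: "span (\<Union>i. seq0 E' i) = span (\<Union>k\<in>{1..}. E' k)"
    by (rule span_UN_eq_span_UN_atLeast_1) (auto simp: seq0_def)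
  show "norm t \<le> Sup {\<bar>blinfun_apply t x\<bar> | x. x \<in> span (\<Union>i. seq0 E' i) \<and> norm x \<le> 1}"
    for t :: "'a \<Rightarrow>\<^sub>L real"
    unfolding spanE by (rule norm_blinfun_le_Sup_dense_span[OF FMD_dense[OF assms(1)]])
qed

section \<open>Blockings\<close>

definition block :: "(nat \<Rightarrow> nat) \<Rightarrow> (nat \<Rightarrow> 'a::real_vector set) \<Rightarrow> nat \<Rightarrow> 'a set" where
  "block \<nu> A j = (if j = 0 then {0} else span (\<Union>i\<in>{\<nu> (j - 1)<..\<nu> j}. A i))"

lemma UN_block_intervals:
  fixes \<nu> :: "nat \<Rightarrow> nat"
  assumes "strict_mono \<nu>"
  shows "(\<Union>j\<in>{a..b} - {0}. {\<nu> (j - 1)<..\<nu> j}) = {\<nu> (a - 1)<..\<nu> b}"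
proof
  have mono: "x \<le> y \<Longrightarrow> \<nu> x \<le> \<nu> y" for x y using strict_mono_leD[OF assms] .
  show "(\<Union>j\<in>{a..b} - {0}. {\<nu> (j - 1)<..\<nu> j}) \<subseteq> {\<nu> (a - 1)<..\<nu> b}"
  proof
    fix i assume "i \<in> (\<Union>j\<in>{a..b} - {0}. {\<nu> (j - 1)<..\<nu> j})"
    then obtain j where "a \<le> j" "j \<le> b" "\<nu> (j - 1) < i" "i \<le> \<nu> j" by force
    moreover have "\<nu> (a - 1) \<le> \<nu> (j - 1)" "\<nu> j \<le> \<nu> b" using \<open>a \<le> j\<close> \<open>j \<le> b\<close> by (simp_all add: mono)
    ultimately show "i \<in> {\<nu> (a - 1)<..\<nu> b}" by simp
  qed
  show "{\<nu> (a - 1)<..\<nu> b} \<subseteq> (\<Union>j\<in>{a..b} - {0}. {\<nu> (j - 1)<..\<nu> j})"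
  proof
    fix i assume i: "i \<in> {\<nu> (a - 1)<..\<nu> b}"
    define j where "j = (LEAST j. i \<le> \<nu> j)"
    have "i \<le> \<nu> b" using i by simp
    then have ij: "i \<le> \<nu> j" and "j \<le> b" unfolding j_def by (auto intro: LeastI Least_le)
    have "j \<noteq> 0"
    proof
      assume "j = 0"
      then show False using ij i mono[of 0 "a - 1"] by simp
    qed
    then have "\<nu> (j - 1) < i" using not_less_Least[of "j - 1" "\<lambda>j. i \<le> \<nu> j"] unfolding j_def by simp
    moreover have "a \<le> j"
    proof (rule ccontr)
      assume "\<not> a \<le> j"
      then have "\<nu> j \<le> \<nu> (a - 1)" by (intro mono) simp
      then show False using ij i by simp
    qed
    ultimately show "i \<in> (\<Union>j\<in>{a..b} - {0}. {\<nu> (j - 1)<..\<nu> j})"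
      using ij \<open>j \<le> b\<close> \<open>j \<noteq> 0\<close> by auto
  qed
qed

lemma block_intervals_disjoint:
  fixes \<nu> :: "nat \<Rightarrow> nat"
  assumes "strict_mono \<nu>" and "j \<noteq> j'"
  shows "{\<nu> (j - 1)<..\<nu> j} \<inter> {\<nu> (j' - 1)<..\<nu> j'} = {}"
proof -
  have disj: "{\<nu> (j - 1)<..\<nu> j} \<inter> {\<nu> (j' - 1)<..\<nu> j'} = {}" if "j < j'" for j j'
  proof -
    have "\<nu> j \<le> \<nu> (j' - 1)" using that by (intro strict_mono_leD[OF assms(1)]) simp
    then show ?thesis by auto
  qed
  from assms(2) consider "j < j'" | "j' < j" by linarith
  then show ?thesis
  proof cases
    case 1
    then show ?thesis by (rule disj)
  next
    case 2
    then show ?thesis using disj[of j' j] by (simp add: Int_commute)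
  qed
qed

lemma mem_block_interval:
  fixes \<nu> :: "nat \<Rightarrow> nat"
  assumes "strict_mono \<nu>" and "\<nu> 0 < i"
  shows "\<exists>j\<ge>1. i \<in> {\<nu> (j - 1)<..\<nu> j}"
proof -
  have "i \<le> \<nu> i" by (rule strict_mono_imp_increasing[OF assms(1)])
  then have "i \<in> (\<Union>j\<in>{1..i} - {0}. {\<nu> (j - 1)<..\<nu> j})"
    unfolding UN_block_intervals[OF assms(1)] using assms(2) by simp
  then obtain j where "1 \<le> j" "i \<in> {\<nu> (j - 1)<..\<nu> j}" by auto
  then show ?thesis by blast
qed

lemma span_UN_block_eq_UN_intervals:
  fixes \<nu> :: "nat \<Rightarrow> nat"
  shows "span (\<Union>j\<in>J. block \<nu> A j) = span (\<Union>i\<in>(\<Union>j\<in>J - {0}. {\<nu> (j - 1)<..\<nu> j}). A i)"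
proof -
  let ?X = "\<Union>j\<in>J - {0}. span (\<Union>i\<in>{\<nu> (j - 1)<..\<nu> j}. A i)"
  have "(\<Union>j\<in>J. block \<nu> A j) \<subseteq> insert 0 ?X" by (auto simp: block_def split: if_splits)
  then have "span (\<Union>j\<in>J. block \<nu> A j) \<subseteq> span ?X" using span_mono[of _ "insert 0 ?X"] by simp
  moreover have "?X \<subseteq> (\<Union>j\<in>J. block \<nu> A j)" by (force simp: block_def)
  ultimately have "span (\<Union>j\<in>J. block \<nu> A j) = span ?X" using span_mono by blast
  also have "\<dots> = span (\<Union>j\<in>J - {0}. \<Union>i\<in>{\<nu> (j - 1)<..\<nu> j}. A i)"
    by (rule span_UN_span)
  also have "(\<Union>j\<in>J - {0}. \<Union>i\<in>{\<nu> (j - 1)<..\<nu> j}. A i) =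
      (\<Union>i\<in>(\<Union>j\<in>J - {0}. {\<nu> (j - 1)<..\<nu> j}). A i)"
    by blast
  finally show ?thesis .
qed

lemma span_UN_block:
  fixes \<nu> :: "nat \<Rightarrow> nat"
  assumes "strict_mono \<nu>"
  shows "span (\<Union>j\<in>{a..b}. block \<nu> A j) = span (\<Union>i\<in>{\<nu> (a - 1)<..\<nu> b}. A i)"
  unfolding span_UN_block_eq_UN_intervals UN_block_intervals[OF assms] ..

lemma is_blocking_block:
  fixes \<nu> :: "nat \<Rightarrow> nat"
  assumes "\<nu> 0 = 0" and "strict_mono \<nu>"
  shows "is_blocking E' (block \<nu> (seq0 E'))"
  unfolding is_blocking_def
proof (intro exI[of _ \<nu>] conjI allI impI)
  fix k :: nat assume "1 \<le> k"
  have "(\<Union>j\<in>{\<nu> (k - 1)<..\<nu> k}. seq0 E' j) = (\<Union>j\<in>{\<nu> (k - 1)<..\<nu> k}. E' j)"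
    by (auto simp: seq0_def)
  then show "block \<nu> (seq0 E') k = span (\<Union>j\<in>{\<nu> (k - 1)<..\<nu> k}. E' j)"
    using \<open>1 \<le> k\<close> by (simp add: block_def)
qed (use assms in auto)

locale FMD_blocking =
  fixes E' :: "nat \<Rightarrow> 'a::real_normed_vector set" and \<nu> :: "nat \<Rightarrow> nat"
  assumes FMD: "FMD E'" and \<nu>_0: "\<nu> 0 = 0" and strict_mono: "strict_mono \<nu>"
begin

sublocale S: biorthogonal_system blinfun_apply "seq0 E'" "biorth0 E'"
  by (rule FMD_biorthogonal_system[OF FMD])

abbreviation "I j \<equiv> {\<nu> (j - 1)<..\<nu> j}"

lemma index_in_block: "1 \<le> i \<Longrightarrow> \<exists>j\<ge>1. i \<in> I j"
  using mem_block_interval[OF strict_mono] \<nu>_0 by simp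

lemma biorth0_subset_biorth_block:
  assumes "i \<in> I j"
  shows "biorth0 E' i \<subseteq> biorth (block \<nu> (seq0 E')) j"
proof
  fix f assume f: "f \<in> biorth0 E' i"
  show "f \<in> biorth (block \<nu> (seq0 E')) j"
    unfolding biorth_def
  proof (intro CollectI allI impI ballI)
    fix j' x assume "1 \<le> j'" "j' \<noteq> j" "x \<in> block \<nu> (seq0 E') j'"
    then have "x \<in> S.ES (I j')" by (simp add: block_def)
    moreover have "{i} \<inter> I j' = {}"
      using block_intervals_disjoint[OF strict_mono \<open>j' \<noteq> j\<close>] assms by auto
    moreover have "f \<in> S.FS {i}" using f by (simp add: span_base)
    ultimately show "blinfun_apply f x = 0" using S.pair_FS_ES_eq_0 by blast
  qed
qed

lemma biorth_block_vanishes: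
  assumes f: "f \<in> biorth (block \<nu> (seq0 E')) j" and "i \<notin> I j" and x: "x \<in> seq0 E' i"
  shows "blinfun_apply f x = 0"
proof (cases "i = 0")
  case True
  then show ?thesis using x by (simp add: seq0_def)
next
  case False
  then have "1 \<le> i" by simp
  then obtain j' where j': "1 \<le> j'" "i \<in> I j'" using index_in_block by blast
  then have "j' \<noteq> j" using \<open>i \<notin> I j\<close> by auto
  have "x \<in> S.ES (I j')" using x j'(2) by (blast intro: span_base)
  then have "x \<in> block \<nu> (seq0 E') j'" using j'(1) by (simp add: block_def)
  then show ?thesis using f j'(1) \<open>j' \<noteq> j\<close> unfolding biorth_def by blast
qed

lemma biorth_block_subset_FS:
  assumes "1 \<le> j"
  shows "biorth (block \<nu> (seq0 E')) j \<subseteq> S.FS (I j)"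
proof
  fix f assume f: "f \<in> biorth (block \<nu> (seq0 E')) j"
  have "\<exists>w\<in>biorth0 E' i. \<forall>x\<in>seq0 E' i. blinfun_apply w x = blinfun_apply f x" for i
    by (rule S.F_extends_functional) (simp add: lin_functional_on_def blinfun.bilinear_simps)
  then obtain W where W: "\<And>i. W i \<in> biorth0 E' i"
      "\<And>i x. x \<in> seq0 E' i \<Longrightarrow> blinfun_apply (W i) x = blinfun_apply f x"
    by metis
  define w where "w = (\<Sum>i\<in>I j. W i)"
  have "W i \<in> S.FS (I j)" if "i \<in> I j" for i using W(1)[of i] that by (blast intro: span_base)
  then have w: "w \<in> S.FS (I j)" unfolding w_def by (rule span_sum)
  have "f - w = 0"
  proof (rule S.E_separates)
    fix i x assume x: "x \<in> seq0 E' i"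
    show "blinfun_apply (f - w) x = 0"
    proof (cases "i \<in> I j")
      case True
      have "blinfun_apply (W i') x = (if i' = i then blinfun_apply f x else 0)" for i'
        using W x S.pair_eq_0[of i' i "W i'" x] by auto
      then have "blinfun_apply w x = blinfun_apply f x"
        using True by (simp add: w_def blinfun.sum_left)
      then show ?thesis by (simp add: blinfun.bilinear_simps)
    next
      case False
      then have "I j \<inter> {i} = {}" by auto
      moreover have "x \<in> S.ES {i}" using x by (simp add: span_base)
      ultimately have "blinfun_apply w x = 0" by (rule S.pair_FS_ES_eq_0[OF _ w])
      moreover have "blinfun_apply f x = 0" using biorth_block_vanishes[OF f False x] .
      ultimately show ?thesis by (simp add: blinfun.bilinear_simps)
    qed
  qed
  then show "f \<in> S.FS (I j)" using w by simp
qed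

lemma biorth0_block: "biorth0 (block \<nu> (seq0 E')) = block \<nu> (biorth0 E')"
proof
  fix j
  show "biorth0 (block \<nu> (seq0 E')) j = block \<nu> (biorth0 E') j"
  proof (cases "j = 0")
    case True
    then show ?thesis by (simp add: biorth0_def block_def)
  next
    case False
    then have "1 \<le> j" by simp
    have "S.FS (I j) \<subseteq> biorth (block \<nu> (seq0 E')) j"
      using biorth0_subset_biorth_block by (intro span_minimal subspace_biorth) blast
    then have "biorth (block \<nu> (seq0 E')) j = S.FS (I j)"
      using biorth_block_subset_FS[OF \<open>1 \<le> j\<close>] by blast
    then show ?thesis using False by (simp add: biorth0_def block_def)
  qed
qed

lemma dense_span_blocks: "closure (span (\<Union>k\<in>{1..}. block \<nu> (seq0 E') k)) = UNIV"
proof -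
  have "E' i \<subseteq> (\<Union>k\<in>{1..}. block \<nu> (seq0 E') k)" if i: "1 \<le> i" for i
  proof -
    obtain j where j: "1 \<le> j" "i \<in> I j" using index_in_block[OF i] by blast
    have "E' i = seq0 E' i" using i by (simp add: seq0_def)
    also have "\<dots> \<subseteq> S.ES (I j)" using j(2) by (blast intro: span_base)
    also have "\<dots> = block \<nu> (seq0 E') j" using j(1) by (simp add: block_def)
    finally show ?thesis using j(1) by auto
  qed
  then have "span (\<Union>k\<in>{1..}. E' k) \<subseteq> span (\<Union>k\<in>{1..}. block \<nu> (seq0 E') k)"
    by (intro span_mono) auto
  then show ?thesis using closure_mono FMD_dense[OF FMD] by blast
qed

lemma block_Int_closure_span_other_blocks:
  assumes "1 \<le> k"
  shows "block \<nu> (seq0 E') k \<inter> closure (span (\<Union>j\<in>{1..} - {k}. block \<nu> (seq0 E') j)) = {0}"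
proof -
  let ?R = "closure (span (\<Union>j\<in>{1..} - {k}. block \<nu> (seq0 E') j))"
  have "x = 0" if x: "x \<in> block \<nu> (seq0 E') k" "x \<in> ?R" for x
  proof (rule S.F_separates)
    fix i t assume t: "t \<in> biorth0 E' i"
    show "blinfun_apply t x = 0"
    proof (cases "i \<in> I k")
      case True
      then have "t \<in> biorth (block \<nu> (seq0 E')) k" using biorth0_subset_biorth_block t by blast
      then have "\<And>y. y \<in> (\<Union>j\<in>{1..} - {k}. block \<nu> (seq0 E') j) \<Longrightarrow> blinfun_apply t y = 0"
        unfolding biorth_def by auto
      then show ?thesis using x(2) by (rule blinfun_eq_0_on_closure_span)
    next
      case False
      then have "{i} \<inter> I k = {}" by auto
      moreover have "t \<in> S.FS {i}" using t by (simp add: span_base)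
      moreover have "x \<in> S.ES (I k)" using x(1) \<open>1 \<le> k\<close> by (simp add: block_def)
      ultimately show ?thesis by (rule S.pair_FS_ES_eq_0)
    qed
  qed
  moreover have "0 \<in> block \<nu> (seq0 E') k" by (simp add: block_def span_zero)
  moreover have "0 \<in> ?R" using closure_subset span_zero by blast
  ultimately show ?thesis by blast
qed

lemma FMD_block: "FMD (block \<nu> (seq0 E'))"
  unfolding FMD_def
proof (intro conjI allI impI)
  fix k :: nat assume "1 \<le> k"
  then show "fin_dim_subspace (block \<nu> (seq0 E') k)"
    using S.ES_finite_span[of "I k"] by (auto simp: fin_dim_subspace_def block_def)
  show "block \<nu> (seq0 E') k \<inter> closure (span (\<Union>j\<in>{1..} - {k}. block \<nu> (seq0 E') j)) = {0}"
    using \<open>1 \<le> k\<close> by (rule block_Int_closure_span_other_blocks)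
next
  show "closure (span (\<Union>k\<in>{1..}. block \<nu> (seq0 E') k)) = UNIV" by (rule dense_span_blocks)
next
  fix x assume killed: "\<forall>k\<ge>1. \<forall>f\<in>biorth (block \<nu> (seq0 E')) k. blinfun_apply f x = 0"
  show "x = 0"
  proof (rule S.F_separates)
    fix i t assume t: "t \<in> biorth0 E' i"
    show "blinfun_apply t x = 0"
    proof (cases "i = 0")
      case True
      then show ?thesis using t by (simp add: biorth0_def)
    next
      case False
      then have "1 \<le> i" by simp
      then obtain j where "1 \<le> j" "i \<in> I j" using index_in_block by blast
      then show ?thesis using killed biorth0_subset_biorth_block t by blast
    qed
  qed
qed

end

theorem lemma2p2:
  fixes E' :: "nat \<Rightarrow> 'a::banach set"
  assumes "separable_space TYPE('a)"
    and "FMD E'"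
    and "one_norming E'"
  shows "\<exists>E. is_blocking E' E \<and> E 0 = {0} \<and> FMD E \<and>
    (\<forall>m n. 1 \<le> m \<and> m \<le> n \<longrightarrow>
      (\<forall>e. lin_functional_on (span (\<Union>j\<in>{m..n}. E j)) e \<longrightarrow>
         (\<exists>x\<in>span (\<Union>j\<in>{m - 1..n + 1}. biorth0 E j).
            (\<forall>y\<in>span (\<Union>j\<in>{m..n}. E j). blinfun_apply x y = e y) \<and>
            norm x \<le> 5 / 2 * dual_norm_on (span (\<Union>j\<in>{m..n}. E j)) e)) \<and>
      (\<forall>fs. lin_functional_on (span (\<Union>j\<in>{m..n}. biorth0 E j)) fs \<longrightarrow>
         (\<exists>z\<in>span (\<Union>j\<in>{m - 1..n + 1}. E j).
            (\<forall>f\<in>span (\<Union>j\<in>{m..n}. biorth0 E j). blinfun_apply f z = fs f) \<and>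
            norm z \<le> 5 / 2 * dual_norm_on (span (\<Union>j\<in>{m..n}. biorth0 E j)) fs)) \<and>
      (\<forall>x\<in>span (\<Union>j\<in>{m..n}. biorth0 E j).
         norm x \<le> 5 / 2 * Sup {\<bar>blinfun_apply x y\<bar> | y.
                     y \<in> span (\<Union>j\<in>{m - 1..n + 1}. E j) \<and> norm y \<le> 1}) \<and>
      (\<forall>x\<in>span (\<Union>j\<in>{m..n}. E j).
         norm x \<le> 5 / 2 * Sup {\<bar>blinfun_apply f x\<bar> | f.
                     f \<in> span (\<Union>j\<in>{m - 1..n + 1}. biorth0 E j) \<and> norm f \<le> 1}))"
proof -
  interpret N: norming_system blinfun_apply "seq0 E'" "biorth0 E'"
    by (rule FMD_norming_system[OF assms(2,3)])
  obtain \<nu> where \<nu>: "\<nu> 0 = 0" "strict_mono \<nu>"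
      and chain: "\<forall>k. N.finitely_norms (11 / 10) (\<nu> k) (\<nu> (Suc k))"
      and chain': "\<forall>k. N.swap.finitely_norms (11 / 10) (\<nu> k) (\<nu> (Suc k))"
    using N.ex_norming_blocking[of "11 / 10"] by auto
  interpret B: FMD_blocking E' \<nu> by (unfold_locales) (fact assms(2) \<nu>)+
  have c: "0 \<le> (11 / 10 :: real)" "11 / 10 * (1 + 11 / 10) \<le> (5 / 2 :: real)" by simp_all
  show ?thesis
  proof (rule exI[of _ "block \<nu> (seq0 E')"],
      unfold B.biorth0_block span_UN_block[OF \<nu>(2)] diff_diff_left one_add_one,
      intro conjI allI impI ballI)
    show "is_blocking E' (block \<nu> (seq0 E'))" by (rule is_blocking_block[OF \<nu>])
    show "block \<nu> (seq0 E') 0 = {0}" by (simp add: block_def)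
    show "FMD (block \<nu> (seq0 E'))" by (rule B.FMD_block)
  qed (erule conjE, rule N.blocks_extension[OF \<nu> chain c] N.swap.blocks_extension[OF \<nu> chain' c]
      N.blocks_norm_le_Sup[OF \<nu> chain c] N.swap.blocks_norm_le_Sup[OF \<nu> chain' c]; assumption)+
qed

end
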